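(* Let $I=[0,1]$ with Lebesgue measure $\lambda$, let $r>0$ be a constant, and let all agents share a common right-continuous filtration $\mathbb G^i=\mathbb G$. Let $X$ be a right-continuous, increasing, $\mathbb G$-progressively measurable real process with $X_\infty>1$. Suppose agent $i$ has intensity $\gamma^i_t=(r-i+\rho_t)\vee0$. Then $\rho_t=(X_t\wedge1)\vee0$ together with $\tau^i=\inf\{t:\ X_t\ge i\}$ is an equilibrium: each $\tau^i$ is optimal for agent $i$ and $\lambda\{i:\ \tau^i\le t\}=\rho_t$ for all $t\ge0$.
   Context: Let $(\Omega,\mathcal F,P)$ be a probability space with right-continuous filtration $\mathbb G$ and an exponential random variable $\mathcal E$ with mean $1$ independent of $\mathcal G_\infty$. $\mathcal T$ is the set of $\mathbb G$-stopping times. For agent $i$ with intensity $\gamma^i\ge0$, $\theta^{i}=\inf\{t:\int_0^t\gamma^i_s\,ds=\mathcal E\}$, and agent $i$'s problem is $\sup_{\tau\in\mathcal T}E[e^{r\tau}\mathbf 1_{\{\theta^i>\tau\}\cup\{\theta^i=\infty\}}]$. An equilibrium is a family $(\tau^i)_{i\in I}$ of stopping times with $\tau^i$ optimal for $\lambda$-a.e. $i$ (given $\gamma^i$ computed from $\rho$) and $\rho_t=\lambda\{i:\tau^i\le t\}$ for all $t$. *)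

theory Defs
  imports "HOL-Probability.Probability"
begin

text \<open>Time runs over [0,\<infinity>). A filtration is a family G :: real \<Rightarrow> 'a measure of sub-sigma-algebras
  of the underlying probability space (only t \<ge> 0 is relevant). Stopping times take values
  in [0,\<infinity>], modelled as ennreal.\<close>

definition G_infty :: "'a measure \<Rightarrow> (real \<Rightarrow> 'a measure) \<Rightarrow> 'a measure" where
  "G_infty M G = sigma (space M) (\<Union>t\<in>{0..}. sets (G t))"

definition right_continuous_filtration :: "'a measure \<Rightarrow> (real \<Rightarrow> 'a measure) \<Rightarrow> bool" where
  "right_continuous_filtration M G \<longleftrightarrow>
     (\<forall>t. space (G t) = space M \<and> sets (G t) \<subseteq> sets M) \<and>
     (\<forall>s t. 0 \<le> s \<longrightarrow> s \<le> t \<longrightarrow> sets (G s) \<subseteq> sets (G t)) \<and>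
     (\<forall>t\<ge>0. sets (G t) = (\<Inter>s\<in>{t<..}. sets (G s)))"

definition G_stopping_time :: "(real \<Rightarrow> 'a measure) \<Rightarrow> ('a \<Rightarrow> ennreal) \<Rightarrow> bool" where
  "G_stopping_time G \<tau> \<longleftrightarrow> (\<forall>t\<ge>0. Measurable.pred (G t) (\<lambda>\<omega>. \<tau> \<omega> \<le> ennreal t))"

definition progressive :: "(real \<Rightarrow> 'a measure) \<Rightarrow> (real \<Rightarrow> 'a \<Rightarrow> real) \<Rightarrow> bool" where
  "progressive G X \<longleftrightarrow> (\<forall>t\<ge>0.
     (\<lambda>p. X (fst p) (snd p)) \<in> borel_measurable (restrict_space lborel {0..t} \<Otimes>\<^sub>M G t))"

text \<open>Default time: \<theta> = inf{t \<ge> 0 : \<integral>_0^t \<gamma>_s ds = \<E>} (inf of the empty set is \<infinity>).\<close>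
definition default_time :: "(real \<Rightarrow> 'a \<Rightarrow> real) \<Rightarrow> ('a \<Rightarrow> real) \<Rightarrow> 'a \<Rightarrow> ennreal" where
  "default_time \<gamma> Ee \<omega> =
     Inf {ennreal t | t. 0 \<le> t \<and> (\<integral>\<^sup>+ s\<in>{0..t}. ennreal (\<gamma> s \<omega>) \<partial>lborel) = ennreal (Ee \<omega>)}"

definition payoff :: "real \<Rightarrow> ennreal \<Rightarrow> ennreal \<Rightarrow> ennreal" where
  "payoff r \<tau> \<theta> =
     (if \<tau> < \<theta> \<or> \<theta> = \<infinity> then (if \<tau> = \<infinity> then \<infinity> else ennreal (exp (r * enn2real \<tau>))) else 0)"

definition agent_value ::
  "'a measure \<Rightarrow> real \<Rightarrow> (real \<Rightarrow> 'a \<Rightarrow> real) \<Rightarrow> ('a \<Rightarrow> real) \<Rightarrow> ('a \<Rightarrow> ennreal) \<Rightarrow> ennreal" where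
  "agent_value M r \<gamma> Ee \<tau> = (\<integral>\<^sup>+ \<omega>. payoff r (\<tau> \<omega>) (default_time \<gamma> Ee \<omega>) \<partial>M)"

definition optimal_stopping ::
  "'a measure \<Rightarrow> (real \<Rightarrow> 'a measure) \<Rightarrow> real \<Rightarrow> (real \<Rightarrow> 'a \<Rightarrow> real) \<Rightarrow> ('a \<Rightarrow> real)
     \<Rightarrow> ('a \<Rightarrow> ennreal) \<Rightarrow> bool" where
  "optimal_stopping M G r \<gamma> Ee \<tau> \<longleftrightarrow>
     G_stopping_time G \<tau> \<and>
     agent_value M r \<gamma> Ee \<tau> = (SUP \<sigma>\<in>{\<sigma>. G_stopping_time G \<sigma>}. agent_value M r \<gamma> Ee \<sigma>)"

end

(* Because the clock Ee is Exp(1) and independent of G_infty, the default time exceeds t with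
   conditional probability exp (- Lambda t), where Lambda is the cumulative intensity. Hence the
   value of any stopping time sigma is E[exp (r sigma - Lambda sigma)], and it is enough to maximise
   t |-> r t - Lambda t path by path. For agent i the rate (r - i + rho)^+ is at most r while X < i
   and at least r once X >= i, so the first passage time of X above level i is such a maximiser.
   Consistency is immediate: tau^i <= t iff i <= X t, so {i. tau^i <= t} = [0, (X t min 1) max 0]. *)

theory Submission
  imports Defs
begin

lemma nn_integral_indep_pair:
  fixes N :: "'a measure" and Ee :: "'a \<Rightarrow> real" and F :: "'a \<times> real \<Rightarrow> ennreal"
  assumes "prob_space M"
    and sub: "sets N \<subseteq> sets M" and sp: "space N = space M"
    and ind: "prob_space.indep_set M (sets N) {Ee -` A \<inter> space M | A. A \<in> sets (borel :: real measure)}"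
    and Em: "Ee \<in> borel_measurable M"
    and F: "F \<in> borel_measurable (N \<Otimes>\<^sub>M borel)"
  shows "(\<integral>\<^sup>+\<omega>. F (\<omega>, Ee \<omega>) \<partial>M) = (\<integral>\<^sup>+\<omega>. (\<integral>\<^sup>+e. F (\<omega>, e) \<partial>distr M borel Ee) \<partial>M)"
proof -
  interpret prob_space M by fact
  have id: "(\<lambda>x. x) \<in> measurable M N"
    using measurable_mono[OF sub sp[symmetric] order_refl refl] measurable_id by blast
  have pair: "(\<lambda>x. (x, Ee x)) \<in> measurable M (N \<Otimes>\<^sub>M borel)"
    using id Em by measurable
  interpret N: prob_space "distr M N (\<lambda>x. x)" using id by (rule prob_space_distr)
  interpret E: prob_space "distr M borel Ee" using Em by (rule prob_space_distr)
  have joint: "distr M N (\<lambda>x. x) \<Otimes>\<^sub>M distr M borel Ee = distr M (N \<Otimes>\<^sub>M borel) (\<lambda>x. (x, Ee x))"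
  proof (rule pair_measure_eqI)
    fix A B assume A: "A \<in> sets (distr M N (\<lambda>x. x))" and B: "B \<in> sets (distr M borel Ee)"
    have A_eq: "(\<lambda>x. x) -` A \<inter> space M = A" using A sets.sets_into_space sp by fastforce
    have "emeasure (distr M (N \<Otimes>\<^sub>M borel) (\<lambda>x. (x, Ee x))) (A \<times> B) = emeasure M (A \<inter> (Ee -` B \<inter> space M))"
      using A B A_eq by (subst emeasure_distr[OF pair]) (auto intro!: arg_cong[where f="emeasure M"])
    also have "\<dots> = emeasure M A * emeasure M (Ee -` B \<inter> space M)"
    proof -
      have "prob (A \<inter> (Ee -` B \<inter> space M)) = prob A * prob (Ee -` B \<inter> space M)"
        using A B by (intro indep_setD[OF ind]) auto
      then show ?thesis by (simp add: emeasure_eq_measure ennreal_mult)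
    qed
    also have "\<dots> = emeasure (distr M N (\<lambda>x. x)) A * emeasure (distr M borel Ee) B"
      using id Em A B A_eq by (simp add: emeasure_distr)
    finally show "emeasure (distr M N (\<lambda>x. x)) A * emeasure (distr M borel Ee) B
        = emeasure (distr M (N \<Otimes>\<^sub>M borel) (\<lambda>x. (x, Ee x))) (A \<times> B)" by simp
  qed (simp_all add: N.sigma_finite_measure_axioms E.sigma_finite_measure_axioms)
  have "(\<integral>\<^sup>+\<omega>. F (\<omega>, Ee \<omega>) \<partial>M) = (\<integral>\<^sup>+p. F p \<partial>(distr M N (\<lambda>x. x) \<Otimes>\<^sub>M distr M borel Ee))"
    using pair F by (simp add: joint nn_integral_distr)
  also have "\<dots> = (\<integral>\<^sup>+\<omega>. (\<integral>\<^sup>+e. F (\<omega>, e) \<partial>distr M borel Ee) \<partial>distr M N (\<lambda>x. x))"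
    using F by (simp add: E.nn_integral_fst)
  also have "\<dots> = (\<integral>\<^sup>+\<omega>. (\<integral>\<^sup>+e. F (\<omega>, e) \<partial>distr M borel Ee) \<partial>M)"
    using F by (intro nn_integral_distr[OF id] E.borel_measurable_nn_integral) simp
  finally show ?thesis .
qed

lemma nn_integral_indep_exponential_tail:
  fixes N :: "'a measure" and Ee :: "'a \<Rightarrow> real" and h :: "'a \<Rightarrow> ennreal" and c :: "'a \<Rightarrow> real"
  assumes P: "prob_space M"
    and sub: "sets N \<subseteq> sets M" and sp: "space N = space M"
    and ind: "prob_space.indep_set M (sets N) {Ee -` A \<inter> space M | A. A \<in> sets (borel :: real measure)}"
    and exp: "distributed M lborel Ee (exponential_density 1)"
    and [measurable]: "h \<in> borel_measurable N" "c \<in> borel_measurable N"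
    and c_nonneg: "\<And>\<omega>. \<omega> \<in> space M \<Longrightarrow> 0 \<le> c \<omega>"
  shows "(\<integral>\<^sup>+\<omega>. h \<omega> * indicator {c \<omega><..} (Ee \<omega>) \<partial>M) = (\<integral>\<^sup>+\<omega>. h \<omega> * ennreal (exp (- c \<omega>)) \<partial>M)"
proof -
  interpret prob_space M by fact
  have Em: "Ee \<in> borel_measurable M"
    using distributed_measurable[OF exp] by simp
  let ?F = "\<lambda>p. h (fst p) * indicator {c (fst p)<..} (snd p) :: ennreal"
  have "?F = (\<lambda>p. h (fst p) * (if c (fst p) < snd p then 1 else 0))"
    by (auto simp: fun_eq_iff)
  moreover have "\<dots> \<in> borel_measurable (N \<Otimes>\<^sub>M borel)"
    by measurable
  ultimately have F: "?F \<in> borel_measurable (N \<Otimes>\<^sub>M borel)" by simp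
  have "(\<integral>\<^sup>+\<omega>. h \<omega> * indicator {c \<omega><..} (Ee \<omega>) \<partial>M) = (\<integral>\<^sup>+\<omega>. ?F (\<omega>, Ee \<omega>) \<partial>M)"
    by simp
  also have "\<dots> = (\<integral>\<^sup>+\<omega>. (\<integral>\<^sup>+e. ?F (\<omega>, e) \<partial>distr M borel Ee) \<partial>M)"
    by (rule nn_integral_indep_pair[OF P sub sp ind Em F])
  also have "\<dots> = (\<integral>\<^sup>+\<omega>. h \<omega> * ennreal (exp (- c \<omega>)) \<partial>M)"
  proof (rule nn_integral_cong)
    fix \<omega> assume "\<omega> \<in> space M"
    then have "prob {x \<in> space M. c \<omega> < Ee x} = exp (- c \<omega>)"
      using exponential_distributedD_gt[OF exp] c_nonneg by simp
    moreover have "Ee -` {c \<omega><..} \<inter> space M = {x \<in> space M. c \<omega> < Ee x}" by auto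
    ultimately show "(\<integral>\<^sup>+e. ?F (\<omega>, e) \<partial>distr M borel Ee) = h \<omega> * ennreal (exp (- c \<omega>))"
      using Em by (simp add: nn_integral_cmult_indicator emeasure_distr emeasure_eq_measure)
  qed
  finally show ?thesis .
qed

definition first_passage :: "(real \<Rightarrow> real) \<Rightarrow> real \<Rightarrow> ennreal" where
  "first_passage f c = Inf {ennreal t | t. 0 \<le> t \<and> c \<le> f t}"

lemma first_passage_le_iff:
  fixes f :: "real \<Rightarrow> real"
  assumes mono: "mono_on {0..} f" and rc: "\<And>t. 0 \<le> t \<Longrightarrow> continuous (at_right t) f"
    and t: "0 \<le> t"
  shows "first_passage f c \<le> ennreal t \<longleftrightarrow> c \<le> f t"
proof
  assume "c \<le> f t"
  then show "first_passage f c \<le> ennreal t"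
    using t unfolding first_passage_def by (intro Inf_lower) auto
next
  assume le: "first_passage f c \<le> ennreal t"
  show "c \<le> f t"
  proof (rule ccontr)
    assume "\<not> c \<le> f t"
    then have "eventually (\<lambda>s. f s < c) (at_right t)"
      using rc[OF t] by (intro order_tendstoD(2)) (auto simp: continuous_within)
    then obtain b where b: "t < b" "\<And>s. t < s \<Longrightarrow> s < b \<Longrightarrow> f s < c"
      by (auto simp: eventually_at_right_field)
    have "ennreal b \<le> first_passage f c"
      unfolding first_passage_def
    proof (rule Inf_greatest, clarify)
      fix u assume u: "0 \<le> u" "c \<le> f u"
      have "f u \<le> f t" if "u \<le> t" using mono u(1) t that by (auto intro: mono_onD)
      then have "b \<le> u" using b u \<open>\<not> c \<le> f t\<close> by (meson le_less_trans linorder_not_le)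
      then show "ennreal b \<le> ennreal u" by (rule ennreal_leI)
    qed
    moreover have "ennreal t < ennreal b" using b t by (simp add: ennreal_less_iff)
    ultimately show False using le by simp
  qed
qed

lemma first_passage_finite:
  "0 \<le> t \<Longrightarrow> c \<le> f t \<Longrightarrow> first_passage f c < \<infinity>"
  unfolding first_passage_def
  by (rule order.strict_trans1[OF Inf_lower, of "ennreal t"]) auto

lemma hitting_time_eq_first_passage:
  fixes L :: "real \<Rightarrow> real"
  assumes cont: "continuous_on {0..} L" and "L 0 \<le> e"
  shows "Inf {ennreal t | t. 0 \<le> t \<and> L t = e} = first_passage L e"
  unfolding first_passage_def
proof (rule antisym)
  show "Inf {ennreal t | t. 0 \<le> t \<and> L t = e} \<le> Inf {ennreal t | t. 0 \<le> t \<and> e \<le> L t}"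
  proof (rule Inf_greatest, clarify)
    fix t assume t: "0 \<le> t" "e \<le> L t"
    then obtain u where u: "0 \<le> u" "u \<le> t" "L u = e"
      using IVT'[of L 0 e t] continuous_on_subset[OF cont] \<open>L 0 \<le> e\<close> by fastforce
    then have "Inf {ennreal t | t. 0 \<le> t \<and> L t = e} \<le> ennreal u"
      by (intro Inf_lower) auto
    also have "\<dots> \<le> ennreal t" using u by (simp add: ennreal_leI)
    finally show "Inf {ennreal t | t. 0 \<le> t \<and> L t = e} \<le> ennreal t" .
  qed
qed (rule Inf_superset_mono, auto)

lemma nn_integral_Ioc_ge:
  fixes g :: "real \<Rightarrow> real"
  assumes "a \<le> b" "0 \<le> lo" and lo: "\<And>s. a < s \<Longrightarrow> s < b \<Longrightarrow> lo \<le> g s"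
  shows "ennreal (lo * (b - a)) \<le> (\<integral>\<^sup>+ s\<in>{a<..b}. ennreal (g s) \<partial>lborel)"
proof -
  have "ennreal (lo * (b - a)) = (\<integral>\<^sup>+ s\<in>{a<..b}. ennreal lo \<partial>lborel)"
    using assms(1,2) by (simp add: nn_integral_cmult_indicator ennreal_mult)
  also have "\<dots> \<le> (\<integral>\<^sup>+ s\<in>{a<..b}. ennreal (g s) \<partial>lborel)"
    using AE_lborel_singleton[of b]
    by (intro nn_integral_mono_AE) (auto simp: indicator_def intro!: ennreal_leI lo elim!: eventually_mono)
  finally show ?thesis .
qed

lemma nn_integral_Ioc_le:
  fixes g :: "real \<Rightarrow> real"
  assumes "a \<le> b" "0 \<le> hi" and hi: "\<And>s. a < s \<Longrightarrow> s < b \<Longrightarrow> g s \<le> hi"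
  shows "(\<integral>\<^sup>+ s\<in>{a<..b}. ennreal (g s) \<partial>lborel) \<le> ennreal (hi * (b - a))"
proof -
  have "(\<integral>\<^sup>+ s\<in>{a<..b}. ennreal (g s) \<partial>lborel) \<le> (\<integral>\<^sup>+ s\<in>{a<..b}. ennreal hi \<partial>lborel)"
    using AE_lborel_singleton[of b]
    by (intro nn_integral_mono_AE) (auto simp: indicator_def intro!: ennreal_leI hi elim!: eventually_mono)
  also have "\<dots> = ennreal (hi * (b - a))"
    using assms(1,2) by (simp add: nn_integral_cmult_indicator ennreal_mult)
  finally show ?thesis .
qed

definition cumulative_rate :: "(real \<Rightarrow> real) \<Rightarrow> real \<Rightarrow> real" where
  "cumulative_rate g t = enn2real (\<integral>\<^sup>+ s\<in>{0..t}. ennreal (g s) \<partial>lborel)"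

locale bounded_rate =
  fixes g :: "real \<Rightarrow> real" and K :: real
  assumes rate_measurable: "g \<in> borel_measurable borel"
    and rate_nonneg: "\<And>s. 0 \<le> g s" and rate_bounded: "\<And>s. g s \<le> K"
begin

lemma nn_integral_eq_cumulative_rate:
  assumes "0 \<le> t"
  shows "(\<integral>\<^sup>+ s\<in>{0..t}. ennreal (g s) \<partial>lborel) = ennreal (cumulative_rate g t)"
proof -
  have "(\<integral>\<^sup>+ s\<in>{0..t}. ennreal (g s) \<partial>lborel) \<le> (\<integral>\<^sup>+ s\<in>{0..t}. ennreal K \<partial>lborel)"
    by (intro nn_integral_mono) (auto simp: indicator_def intro!: ennreal_leI rate_bounded)
  also have "\<dots> < \<infinity>" using assms by (simp add: nn_integral_cmult_indicator ennreal_mult_less_top)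
  finally show ?thesis unfolding cumulative_rate_def by (simp add: less_top)
qed

lemma cumulative_rate_nonneg: "0 \<le> cumulative_rate g t"
  unfolding cumulative_rate_def by simp

lemma cumulative_rate_0: "cumulative_rate g 0 = 0"
  unfolding cumulative_rate_def by simp

lemma cumulative_rate_split:
  assumes "0 \<le> a" "a \<le> b"
  shows "ennreal (cumulative_rate g b)
    = ennreal (cumulative_rate g a) + (\<integral>\<^sup>+ s\<in>{a<..b}. ennreal (g s) \<partial>lborel)"
proof -
  have "{0..b} = {0..a} \<union> {a<..b}" using assms by auto
  then have "(\<integral>\<^sup>+ s\<in>{0..b}. ennreal (g s) \<partial>lborel)
      = (\<integral>\<^sup>+ s\<in>{0..a}. ennreal (g s) \<partial>lborel) + (\<integral>\<^sup>+ s\<in>{a<..b}. ennreal (g s) \<partial>lborel)"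
    using rate_measurable by (simp, intro nn_integral_disjoint_pair) auto
  then show ?thesis using assms by (simp add: nn_integral_eq_cumulative_rate)
qed

lemma cumulative_rate_mono: "mono_on {0..} (cumulative_rate g)"
proof (rule mono_onI)
  fix a b :: real assume "a \<in> {0..}" "a \<le> b"
  then have "ennreal (cumulative_rate g a) \<le> ennreal (cumulative_rate g b)"
    using cumulative_rate_split[of a b] by simp
  then show "cumulative_rate g a \<le> cumulative_rate g b"
    by (simp add: ennreal_le_iff cumulative_rate_nonneg)
qed

lemma cumulative_rate_increment:
  assumes "0 \<le> a" "a \<le> b"
  shows "ennreal (cumulative_rate g b - cumulative_rate g a) = (\<integral>\<^sup>+ s\<in>{a<..b}. ennreal (g s) \<partial>lborel)"
  using cumulative_rate_split[OF assms] cumulative_rate_nonneg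
  by (simp add: ennreal_minus[symmetric])

lemma cumulative_rate_increment_ge:
  assumes "0 \<le> a" "a \<le> b" "0 \<le> lo" "\<And>s. a < s \<Longrightarrow> s < b \<Longrightarrow> lo \<le> g s"
  shows "lo * (b - a) \<le> cumulative_rate g b - cumulative_rate g a"
proof -
  have "ennreal (lo * (b - a)) \<le> ennreal (cumulative_rate g b - cumulative_rate g a)"
    using nn_integral_Ioc_ge[OF assms(2-4)] cumulative_rate_increment[OF assms(1,2)] by simp
  moreover have "cumulative_rate g a \<le> cumulative_rate g b"
    using cumulative_rate_mono assms(1,2) by (auto intro: mono_onD)
  ultimately show ?thesis by simp
qed

lemma cumulative_rate_increment_le:
  assumes "0 \<le> a" "a \<le> b" "0 \<le> hi" "\<And>s. a < s \<Longrightarrow> s < b \<Longrightarrow> g s \<le> hi"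
  shows "cumulative_rate g b - cumulative_rate g a \<le> hi * (b - a)"
proof -
  have "ennreal (cumulative_rate g b - cumulative_rate g a) \<le> ennreal (hi * (b - a))"
    using nn_integral_Ioc_le[OF assms(2-4)] cumulative_rate_increment[OF assms(1,2)] by simp
  then show ?thesis using assms by (simp add: ennreal_le_iff)
qed

lemma cumulative_rate_continuous: "continuous_on {0..} (cumulative_rate g)"
proof -
  have K: "0 \<le> K" using rate_nonneg rate_bounded order_trans by blast
  have "dist (cumulative_rate g x) (cumulative_rate g y) \<le> K * dist x y"
    if "x \<in> {0..}" "y \<in> {0..}" "x \<le> y" for x y
    using that cumulative_rate_increment_ge[of x y 0] cumulative_rate_increment_le[of x y K]
    by (auto simp: dist_real_def rate_nonneg rate_bounded K)
  then have "K-lipschitz_on {0..} (cumulative_rate g)"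
    by (intro lipschitz_onI K) (metis dist_commute linorder_le_cases)
  then show ?thesis by (rule lipschitz_on_continuous_on)
qed

lemma cumulative_rate_unbounded:
  assumes "0 < c" "0 \<le> T" "\<And>u. T < u \<Longrightarrow> c \<le> g u"
  shows "\<exists>t\<ge>0. e \<le> cumulative_rate g t"
proof (intro exI conjI)
  let ?t = "T + \<bar>e\<bar> / c"
  have "c * (?t - T) \<le> cumulative_rate g ?t - cumulative_rate g T"
    using assms by (intro cumulative_rate_increment_ge) auto
  then show "e \<le> cumulative_rate g ?t"
    using assms(1) cumulative_rate_nonneg[of T] by simp
  show "0 \<le> ?t" using assms by simp
qed

lemma cumulative_rate_drift_max:
  assumes "0 \<le> c" "0 \<le> T" "0 \<le> s"
    and "\<And>u. 0 < u \<Longrightarrow> u < T \<Longrightarrow> g u \<le> c" and "\<And>u. T < u \<Longrightarrow> c \<le> g u"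
  shows "c * s - cumulative_rate g s \<le> c * T - cumulative_rate g T"
proof (cases "s \<le> T")
  case True
  then have "cumulative_rate g T - cumulative_rate g s \<le> c * (T - s)"
    using assms by (intro cumulative_rate_increment_le) auto
  then show ?thesis by (simp add: algebra_simps)
next
  case False
  then have "c * (s - T) \<le> cumulative_rate g s - cumulative_rate g T"
    using assms by (intro cumulative_rate_increment_ge) auto
  then show ?thesis by (simp add: algebra_simps)
qed

end

lemma filtration_subalgebra:
  assumes "right_continuous_filtration M G"
  shows "space (G t) = space M" and "sets (G t) \<subseteq> sets M"
  using conjunct1[OF assms[unfolded right_continuous_filtration_def]] by blast+

lemma filtration_generators_subset:
  assumes "right_continuous_filtration M G"
  shows "(\<Union>t\<in>{0..}. sets (G t)) \<subseteq> Pow (space M)"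
  using sets.space_closed filtration_subalgebra(1)[OF assms] by (metis UN_least)

lemma space_G_infty:
  "right_continuous_filtration M G \<Longrightarrow> space (G_infty M G) = space M"
  unfolding G_infty_def by (simp add: space_measure_of filtration_generators_subset)

lemma sets_G_infty:
  "right_continuous_filtration M G
    \<Longrightarrow> sets (G_infty M G) = sigma_sets (space M) (\<Union>t\<in>{0..}. sets (G t))"
  unfolding G_infty_def by (simp add: sets_measure_of filtration_generators_subset)

lemma sets_G_infty_subset:
  assumes "right_continuous_filtration M G"
  shows "sets (G_infty M G) \<subseteq> sets M"
  unfolding sets_G_infty[OF assms]
  by (rule sets.sigma_sets_subset) (use filtration_subalgebra(2)[OF assms] in blast)

lemma sets_filtration_subset_G_infty:
  assumes "right_continuous_filtration M G" "0 \<le> t"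
  shows "sets (G t) \<subseteq> sets (G_infty M G)"
  unfolding sets_G_infty[OF assms(1)] using assms(2) by (blast intro: sigma_sets.Basic)

lemma measurable_G_infty:
  assumes "right_continuous_filtration M G" "0 \<le> t" "f \<in> measurable (G t) N"
  shows "f \<in> measurable (G_infty M G) N"
proof -
  have "space (G t) = space (G_infty M G)"
    by (simp add: filtration_subalgebra(1)[OF assms(1)] space_G_infty[OF assms(1)])
  then show ?thesis
    using measurable_mono[OF order_refl refl sets_filtration_subset_G_infty[OF assms(1,2)]] assms(3)
    by blast
qed

lemma stopping_time_measurable_G_infty:
  assumes filt: "right_continuous_filtration M G" and "G_stopping_time G \<sigma>"
  shows "\<sigma> \<in> borel_measurable (G_infty M G)"
proof (rule borel_measurableI_le)
  fix y :: ennreal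
  show "{x \<in> space (G_infty M G). \<sigma> x \<le> y} \<in> sets (G_infty M G)"
  proof (cases y)
    case (real t)
    then have "{x \<in> space (G t). \<sigma> x \<le> ennreal t} \<in> sets (G t)"
      using assms(2) unfolding G_stopping_time_def pred_def by auto
    moreover have "{x \<in> space (G_infty M G). \<sigma> x \<le> y} = {x \<in> space (G t). \<sigma> x \<le> ennreal t}"
      using real by (simp add: filtration_subalgebra(1)[OF filt] space_G_infty[OF filt])
    ultimately show ?thesis
      using sets_filtration_subset_G_infty[OF filt \<open>0 \<le> t\<close>] by auto
  qed simp
qed

lemma progressive_measurable_at:
  assumes "progressive G X" "0 \<le> t"
  shows "X t \<in> borel_measurable (G t)"
proof -
  have "(\<lambda>p. X (fst p) (snd p)) \<in> borel_measurable (restrict_space lborel {0..t} \<Otimes>\<^sub>M G t)"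
    using assms unfolding progressive_def by blast
  from measurable_compose_Pair1[OF _ this, of t] assms(2) show ?thesis by simp
qed

lemma nn_integral_Icc_measurable:
  fixes f :: "real \<Rightarrow> 'a \<Rightarrow> ennreal"
  assumes "(\<lambda>p. f (fst p) (snd p)) \<in> borel_measurable (restrict_space lborel {0..t} \<Otimes>\<^sub>M N)"
  shows "(\<lambda>\<omega>. \<integral>\<^sup>+ s\<in>{0..t}. f s \<omega> \<partial>lborel) \<in> borel_measurable N"
proof -
  interpret S: sigma_finite_measure "restrict_space lborel {0..t::real}"
    by (rule sigma_finite_measure_restrict_space) (auto intro: lborel.sigma_finite_measure_axioms)
  have "(\<lambda>(\<omega>, s). f s \<omega>) \<in> borel_measurable (N \<Otimes>\<^sub>M restrict_space lborel {0..t})"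
    using measurable_pair_swap[OF assms] by (simp add: case_prod_beta')
  then have "(\<lambda>\<omega>. \<integral>\<^sup>+ s. f s \<omega> \<partial>restrict_space lborel {0..t}) \<in> borel_measurable N"
    by (rule S.borel_measurable_nn_integral)
  then show ?thesis by (simp add: nn_integral_restrict_space)
qed

lemma measurable_at_random_time:
  fixes F :: "'a \<Rightarrow> real \<Rightarrow> real" and T :: "'a \<Rightarrow> ennreal"
  assumes F_measurable: "\<And>t. 0 \<le> t \<Longrightarrow> (\<lambda>\<omega>. F \<omega> t) \<in> borel_measurable N"
    and T_measurable: "T \<in> borel_measurable N"
    and mono: "\<And>\<omega>. \<omega> \<in> space N \<Longrightarrow> mono_on {0..} (F \<omega>)"
    and rc: "\<And>\<omega> t. \<omega> \<in> space N \<Longrightarrow> 0 \<le> t \<Longrightarrow> continuous (at_right t) (F \<omega>)"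
  shows "(\<lambda>\<omega>. F \<omega> (enn2real (T \<omega>))) \<in> borel_measurable N"
proof (rule borel_measurable_iff_less[THEN iffD2], intro allI)
  fix a :: real
  let ?Q = "\<rat> \<inter> {0::real..}"
  let ?A = "\<lambda>q. {\<omega> \<in> space N. enn2real (T \<omega>) < q} \<inter> {\<omega> \<in> space N. F \<omega> q < a}"
  have "{\<omega> \<in> space N. F \<omega> (enn2real (T \<omega>)) < a} = (\<Union>q\<in>?Q. ?A q)"
  proof (intro set_eqI iffI)
    fix \<omega> assume "\<omega> \<in> {\<omega> \<in> space N. F \<omega> (enn2real (T \<omega>)) < a}"
    then have \<omega>: "\<omega> \<in> space N" and lt: "F \<omega> (enn2real (T \<omega>)) < a" by auto
    have "eventually (\<lambda>s. F \<omega> s < a) (at_right (enn2real (T \<omega>)))"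
      using rc[OF \<omega>, of "enn2real (T \<omega>)"] lt by (intro order_tendstoD(2)) (auto simp: continuous_within)
    then obtain b where b: "enn2real (T \<omega>) < b" "\<And>s. enn2real (T \<omega>) < s \<Longrightarrow> s < b \<Longrightarrow> F \<omega> s < a"
      by (auto simp: eventually_at_right_field)
    obtain q where q: "q \<in> \<rat>" "enn2real (T \<omega>) < q" "q < b"
      using Rats_dense_in_real[OF b(1)] by blast
    moreover have "0 \<le> q" using enn2real_nonneg[of "T \<omega>"] q(2) by linarith
    ultimately show "\<omega> \<in> (\<Union>q\<in>?Q. ?A q)"
      using \<omega> b(2)[of q] by blast
  next
    fix \<omega> assume "\<omega> \<in> (\<Union>q\<in>?Q. ?A q)"
    then obtain q where \<omega>: "\<omega> \<in> space N" and q: "0 \<le> q" "enn2real (T \<omega>) < q" "F \<omega> q < a"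
      by blast
    then have "F \<omega> (enn2real (T \<omega>)) \<le> F \<omega> q"
      using mono_onD[OF mono[OF \<omega>], of "enn2real (T \<omega>)" q] by simp
    then show "\<omega> \<in> {\<omega> \<in> space N. F \<omega> (enn2real (T \<omega>)) < a}" using \<omega> q by simp
  qed
  moreover have "(\<Union>q\<in>?Q. ?A q) \<in> sets N"
  proof (rule sets.countable_UN'')
    show "countable ?Q" using countable_rat by (rule countable_subset[rotated]) auto
    fix q assume "q \<in> ?Q"
    then have [measurable]: "(\<lambda>\<omega>. F \<omega> q) \<in> borel_measurable N" using F_measurable by auto
    note T_measurable[measurable]
    show "?A q \<in> sets N" by measurable
  qed
  ultimately show "{\<omega> \<in> space N. F \<omega> (enn2real (T \<omega>)) < a} \<in> sets N" by simp
qed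

lemma first_passage_stopping_time:
  assumes filt: "right_continuous_filtration M G" and "progressive G X"
    and mono: "\<And>\<omega>. \<omega> \<in> space M \<Longrightarrow> mono_on {0..} (\<lambda>t. X t \<omega>)"
    and rc: "\<And>\<omega> t. \<omega> \<in> space M \<Longrightarrow> 0 \<le> t \<Longrightarrow> continuous (at_right t) (\<lambda>s. X s \<omega>)"
  shows "G_stopping_time G (\<lambda>\<omega>. first_passage (\<lambda>t. X t \<omega>) c)"
  unfolding G_stopping_time_def
proof (intro allI impI)
  fix t :: real assume t: "0 \<le> t"
  have [measurable]: "X t \<in> borel_measurable (G t)"
    using progressive_measurable_at[OF \<open>progressive G X\<close> t] .
  have "{\<omega> \<in> space (G t). first_passage (\<lambda>t. X t \<omega>) c \<le> ennreal t} = {\<omega> \<in> space (G t). c \<le> X t \<omega>}"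
    using first_passage_le_iff[OF mono rc t] filtration_subalgebra(1)[OF filt] by auto
  moreover have "Measurable.pred (G t) (\<lambda>\<omega>. c \<le> X t \<omega>)" by measurable
  ultimately show "Measurable.pred (G t) (\<lambda>\<omega>. first_passage (\<lambda>t. X t \<omega>) c \<le> ennreal t)"
    by (simp add: pred_def)
qed

lemma exists_gt_of_Lim_gt:
  fixes f :: "real \<Rightarrow> real"
  assumes mono: "mono_on {0..} f" and lim: "ereal c < Lim at_top (\<lambda>t. ereal (f t))"
  shows "\<exists>t\<ge>0. c < f t"
proof -
  let ?l = "SUP t\<in>{0..}. ereal (f t)"
  have "((\<lambda>t. ereal (f t)) \<longlongrightarrow> ?l) at_top"
  proof (rule order_tendstoI)
    fix a assume "a < ?l"
    then obtain t0 where t0: "0 \<le> t0" "a < ereal (f t0)" by (auto simp: less_SUP_iff)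
    have "a < ereal (f t)" if "t0 \<le> t" for t
      using mono_onD[OF mono, of t0 t] t0 that by (auto intro: order.strict_trans2)
    then show "eventually (\<lambda>t. a < ereal (f t)) at_top"
      by (auto simp: eventually_at_top_linorder)
  next
    fix a assume "?l < a"
    have "ereal (f t) < a" if "0 \<le> t" for t
      using SUP_upper[of t "{0..}" "\<lambda>t. ereal (f t)"] \<open>?l < a\<close> that by auto
    then show "eventually (\<lambda>t. ereal (f t) < a) at_top"
      by (auto simp: eventually_at_top_linorder)
  qed
  then have "Lim at_top (\<lambda>t. ereal (f t)) = ?l" by (rule tendsto_Lim[rotated]) simp
  then obtain t where "0 \<le> t" "ereal c < ereal (f t)" using lim by (auto simp: less_SUP_iff)
  then show ?thesis by auto
qed

lemma measure_Icc_0_1_le: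
  "measure lborel {i \<in> {0..1}. i \<le> x} = max (min x 1) (0::real)"
proof (cases "0 \<le> x")
  case True
  then have "{i \<in> {0..1}. i \<le> x} = {0..min x 1}" by auto
  then show ?thesis using True by simp
next
  case False
  then have empty: "{i \<in> {0..1}. i \<le> x} = {}" by auto
  show ?thesis unfolding empty using False by simp
qed

text \<open>The payoff \<open>exp (r t)\<close> weighted by the conditional survival probability \<open>exp (- L t)\<close>;
  never stopping yields nothing, because the default time is finite.\<close>
definition pathwise_payoff :: "real \<Rightarrow> (real \<Rightarrow> real) \<Rightarrow> ennreal \<Rightarrow> ennreal" where
  "pathwise_payoff r L t = (if t = \<infinity> then 0 else ennreal (exp (r * enn2real t - L (enn2real t))))"

lemma pathwise_payoff_le_if_maximal:
  assumes "0 \<le> T" "\<And>s. 0 \<le> s \<Longrightarrow> r * s - L s \<le> r * T - L T"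
  shows "pathwise_payoff r L \<sigma> \<le> pathwise_payoff r L (ennreal T)"
  using assms(2)[of "enn2real \<sigma>"] assms(1) unfolding pathwise_payoff_def by (auto intro!: ennreal_leI)

locale exponential_clock = prob_space M
  for M :: "'a measure" +
  fixes G :: "real \<Rightarrow> 'a measure" and Ee :: "'a \<Rightarrow> real"
  assumes filtration: "right_continuous_filtration M G"
    and exponential: "distributed M lborel Ee (exponential_density 1)"
    and independent: "prob_space.indep_set M (sets (G_infty M G))
      {Ee -` A \<inter> space M | A. A \<in> sets (borel :: real measure)}"
begin

lemma AE_clock_nonneg: "AE \<omega> in M. 0 \<le> Ee \<omega>"
proof -
  have "Measurable.pred lborel (\<lambda>x::real. 0 \<le> x)" by measurable
  from distributed_AE2[OF exponential this] show ?thesis by (simp add: erlang_density_def)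
qed

end

locale cumulative_intensity = exponential_clock +
  fixes \<gamma> :: "real \<Rightarrow> 'a \<Rightarrow> real" and L :: "'a \<Rightarrow> real \<Rightarrow> real"
  assumes nn_integral_intensity:
      "\<And>\<omega> t. \<omega> \<in> space M \<Longrightarrow> 0 \<le> t \<Longrightarrow> (\<integral>\<^sup>+ s\<in>{0..t}. ennreal (\<gamma> s \<omega>) \<partial>lborel) = ennreal (L \<omega> t)"
    and continuous_L: "\<And>\<omega>. \<omega> \<in> space M \<Longrightarrow> continuous_on {0..} (L \<omega>)"
    and mono_L: "\<And>\<omega>. \<omega> \<in> space M \<Longrightarrow> mono_on {0..} (L \<omega>)"
    and L_0: "\<And>\<omega>. \<omega> \<in> space M \<Longrightarrow> L \<omega> 0 = 0"
    and L_unbounded: "\<And>\<omega> e. \<omega> \<in> space M \<Longrightarrow> \<exists>t\<ge>0. e \<le> L \<omega> t"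
    and measurable_L: "\<And>t. 0 \<le> t \<Longrightarrow> (\<lambda>\<omega>. L \<omega> t) \<in> borel_measurable (G_infty M G)"
begin

lemma L_nonneg: "\<omega> \<in> space M \<Longrightarrow> 0 \<le> t \<Longrightarrow> 0 \<le> L \<omega> t"
  using mono_onD[OF mono_L, of \<omega> 0 t] L_0 by simp

lemma right_continuous:
  assumes "\<omega> \<in> space M" "0 \<le> t"
  shows "continuous (at_right t) (L \<omega>)"
proof -
  have "continuous (at t within {0..}) (L \<omega>)"
    using continuous_L[OF assms(1)] assms(2) by (simp add: continuous_on_eq_continuous_within)
  then show ?thesis by (rule continuous_within_subset) (use assms(2) in auto)
qed

lemma default_time_eq_first_passage:
  assumes \<omega>: "\<omega> \<in> space M" and "0 \<le> Ee \<omega>"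
  shows "default_time \<gamma> Ee \<omega> = first_passage (L \<omega>) (Ee \<omega>)"
proof -
  have "(\<integral>\<^sup>+ s\<in>{0..t}. ennreal (\<gamma> s \<omega>) \<partial>lborel) = ennreal (Ee \<omega>) \<longleftrightarrow> L \<omega> t = Ee \<omega>" if "0 \<le> t" for t
    using nn_integral_intensity[OF \<omega> that] L_nonneg[OF \<omega> that] \<open>0 \<le> Ee \<omega>\<close> by simp
  then have "default_time \<gamma> Ee \<omega> = Inf {ennreal t | t. 0 \<le> t \<and> L \<omega> t = Ee \<omega>}"
    unfolding default_time_def by (intro arg_cong[where f=Inf] Collect_cong) blast
  also have "\<dots> = first_passage (L \<omega>) (Ee \<omega>)"
    using hitting_time_eq_first_passage[OF continuous_L[OF \<omega>]] L_0[OF \<omega>] \<open>0 \<le> Ee \<omega>\<close> by simp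
  finally show ?thesis .
qed

text \<open>Survival past \<open>t\<close> is the event \<open>L t < Ee\<close>; given \<open>G_infty\<close>, independence of the clock
  gives it probability \<open>exp (- L t)\<close>.\<close>
lemma agent_value_eq:
  assumes "G_stopping_time G \<sigma>"
  shows "agent_value M r \<gamma> Ee \<sigma> = (\<integral>\<^sup>+\<omega>. pathwise_payoff r (L \<omega>) (\<sigma> \<omega>) \<partial>M)"
proof -
  define h where "h \<omega> = (if \<sigma> \<omega> = \<infinity> then 0 else ennreal (exp (r * enn2real (\<sigma> \<omega>))))" for \<omega>
  define c where "c \<omega> = L \<omega> (enn2real (\<sigma> \<omega>))" for \<omega>
  have [measurable]: "\<sigma> \<in> borel_measurable (G_infty M G)"
    by (rule stopping_time_measurable_G_infty[OF filtration assms])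
  have h_measurable: "h \<in> borel_measurable (G_infty M G)" unfolding h_def by measurable
  have c_measurable: "c \<in> borel_measurable (G_infty M G)" unfolding c_def
    by (rule measurable_at_random_time) (use measurable_L mono_L right_continuous in \<open>auto simp: space_G_infty[OF filtration]\<close>)
  have "AE \<omega> in M. payoff r (\<sigma> \<omega>) (default_time \<gamma> Ee \<omega>) = h \<omega> * indicator {c \<omega><..} (Ee \<omega>)"
    using AE_clock_nonneg AE_space
  proof eventually_elim
    case (elim \<omega>)
    then have \<omega>: "\<omega> \<in> space M" and e: "0 \<le> Ee \<omega>" by auto
    obtain t where "0 \<le> t" "Ee \<omega> \<le> L \<omega> t" using L_unbounded[OF \<omega>] by blast
    then have finite: "default_time \<gamma> Ee \<omega> \<noteq> \<infinity>"
      using first_passage_finite default_time_eq_first_passage[OF \<omega> e] by fastforce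
    have less_iff: "ennreal s < default_time \<gamma> Ee \<omega> \<longleftrightarrow> L \<omega> s < Ee \<omega>" if "0 \<le> s" for s
      using first_passage_le_iff[OF mono_L[OF \<omega>] right_continuous[OF \<omega>] that]
      by (simp add: default_time_eq_first_passage[OF \<omega> e] not_le[symmetric])
    show ?case
    proof (cases "\<sigma> \<omega>")
      case (real s)
      then show ?thesis using finite less_iff[of s] unfolding payoff_def h_def c_def
        by (auto simp: indicator_def)
    qed (use finite in \<open>simp add: payoff_def h_def\<close>)
  qed
  then have "agent_value M r \<gamma> Ee \<sigma> = (\<integral>\<^sup>+\<omega>. h \<omega> * indicator {c \<omega><..} (Ee \<omega>) \<partial>M)"
    unfolding agent_value_def by (rule nn_integral_cong_AE)
  also have "\<dots> = (\<integral>\<^sup>+\<omega>. h \<omega> * ennreal (exp (- c \<omega>)) \<partial>M)"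
    using L_nonneg unfolding c_def
    by (intro nn_integral_indep_exponential_tail[OF prob_space_axioms sets_G_infty_subset[OF filtration]
        space_G_infty[OF filtration] independent exponential h_measurable c_measurable[unfolded c_def]]) simp
  also have "\<dots> = (\<integral>\<^sup>+\<omega>. pathwise_payoff r (L \<omega>) (\<sigma> \<omega>) \<partial>M)"
    unfolding h_def c_def pathwise_payoff_def
    by (intro nn_integral_cong) (simp add: ennreal_mult'[symmetric] exp_diff exp_minus field_simps)
  finally show ?thesis .
qed

theorem optimal_stopping_if_pathwise_optimal:
  assumes stopping: "G_stopping_time G \<tau>"
    and optimal: "\<And>\<omega> \<sigma>. \<omega> \<in> space M \<Longrightarrow> pathwise_payoff r (L \<omega>) \<sigma> \<le> pathwise_payoff r (L \<omega>) (\<tau> \<omega>)"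
  shows "optimal_stopping M G r \<gamma> Ee \<tau>"
  unfolding optimal_stopping_def
proof (intro conjI stopping antisym)
  show "agent_value M r \<gamma> Ee \<tau> \<le> (SUP \<sigma>\<in>{\<sigma>. G_stopping_time G \<sigma>}. agent_value M r \<gamma> Ee \<sigma>)"
    by (rule SUP_upper) (simp add: stopping)
  show "(SUP \<sigma>\<in>{\<sigma>. G_stopping_time G \<sigma>}. agent_value M r \<gamma> Ee \<sigma>) \<le> agent_value M r \<gamma> Ee \<tau>"
    using optimal by (intro SUP_least) (simp add: agent_value_eq stopping nn_integral_mono)
qed

end

definition equilibrium_rate :: "real \<Rightarrow> real \<Rightarrow> real \<Rightarrow> real" where
  "equilibrium_rate r i x = max (r - i + max (min x 1) 0) 0"

lemma equilibrium_rate_mono: "x \<le> y \<Longrightarrow> equilibrium_rate r i x \<le> equilibrium_rate r i y"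
  unfolding equilibrium_rate_def by (auto simp: max_def min_def)

lemma equilibrium_rate_below: "0 \<le> i \<Longrightarrow> x < i \<Longrightarrow> 0 < r \<Longrightarrow> equilibrium_rate r i x \<le> r"
  unfolding equilibrium_rate_def by (auto simp: max_def min_def)

lemma equilibrium_rate_above: "i \<le> 1 \<Longrightarrow> i \<le> x \<Longrightarrow> r \<le> equilibrium_rate r i x"
  unfolding equilibrium_rate_def by (auto simp: max_def min_def)

text \<open>Paths are extended constantly to negative times, so that the rate is monotone on all of \<open>\<real>\<close>.\<close>
lemma bounded_rate_equilibrium_path:
  assumes "mono_on {0..} f" "0 < r" "0 \<le> i"
  shows "bounded_rate (\<lambda>s. equilibrium_rate r i (f (max s 0))) (r + 1)"
proof
  have "mono (\<lambda>s. equilibrium_rate r i (f (max s 0)))"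
    using mono_onD[OF assms(1)] by (intro monoI equilibrium_rate_mono) (simp add: max.coboundedI2 max_def)
  then show "(\<lambda>s. equilibrium_rate r i (f (max s 0))) \<in> borel_measurable borel"
    by (rule borel_measurable_mono)
qed (use assms in \<open>auto simp: equilibrium_rate_def\<close>)

lemma first_passage_drift_max:
  assumes mono: "mono_on {0..} f" and rc: "\<And>t. 0 \<le> t \<Longrightarrow> continuous (at_right t) f"
    and big: "\<exists>t\<ge>0. 1 < f t" and "0 < r" "0 \<le> i" "i \<le> 1"
  defines "\<Lambda> \<equiv> cumulative_rate (\<lambda>s. equilibrium_rate r i (f (max s 0)))"
  obtains T where "0 \<le> T" "first_passage f i = ennreal T"
    and "\<And>s. 0 \<le> s \<Longrightarrow> r * s - \<Lambda> s \<le> r * T - \<Lambda> T"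
proof -
  interpret bounded_rate "\<lambda>s. equilibrium_rate r i (f (max s 0))" "r + 1"
    using bounded_rate_equilibrium_path[OF mono \<open>0 < r\<close> \<open>0 \<le> i\<close>] .
  obtain t where "0 \<le> t" "1 < f t" using big by blast
  then have "first_passage f i < \<infinity>" using \<open>i \<le> 1\<close> by (intro first_passage_finite) auto
  then obtain T where T: "0 \<le> T" "first_passage f i = ennreal T"
    by (cases "first_passage f i") auto
  have le_iff: "T \<le> u \<longleftrightarrow> i \<le> f u" if "0 \<le> u" for u
    using first_passage_le_iff[OF mono rc that, of i] that unfolding T(2) by simp
  have "r * s - \<Lambda> s \<le> r * T - \<Lambda> T" if "0 \<le> s" for s
    unfolding \<Lambda>_def
  proof (rule cumulative_rate_drift_max)
    fix u assume "0 < u" "u < T"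
    then show "equilibrium_rate r i (f (max u 0)) \<le> r"
      using le_iff[of u] assms by (intro equilibrium_rate_below) auto
  next
    fix u assume "T < u"
    then show "r \<le> equilibrium_rate r i (f (max u 0))"
      using le_iff[of u] T assms by (intro equilibrium_rate_above) auto
  qed (use that T \<open>0 < r\<close> in auto)
  with T show ?thesis by (rule that)
qed

context exponential_clock
begin

lemma cumulative_intensity_equilibrium:
  assumes prog: "progressive G X" and mono_X: "\<And>\<omega>. \<omega> \<in> space M \<Longrightarrow> mono_on {0..} (\<lambda>t. X t \<omega>)"
    and big: "\<And>\<omega>. \<omega> \<in> space M \<Longrightarrow> \<exists>t\<ge>0. 1 < X t \<omega>" and "0 < r" "0 \<le> i" "i \<le> 1"
  shows "cumulative_intensity M G Ee (\<lambda>t \<omega>. equilibrium_rate r i (X t \<omega>))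
    (\<lambda>\<omega>. cumulative_rate (\<lambda>s. equilibrium_rate r i (X (max s 0) \<omega>)))"
proof -
  let ?g = "\<lambda>\<omega> s. equilibrium_rate r i (X (max s 0) \<omega>)"
  have path: "bounded_rate (?g \<omega>) (r + 1)" if "\<omega> \<in> space M" for \<omega>
    using bounded_rate_equilibrium_path[OF mono_X[OF that] \<open>0 < r\<close> \<open>0 \<le> i\<close>] .
  have Icc_eq: "(\<integral>\<^sup>+ s\<in>{0..t}. ennreal (equilibrium_rate r i (X s \<omega>)) \<partial>lborel)
      = (\<integral>\<^sup>+ s\<in>{0..t}. ennreal (?g \<omega> s) \<partial>lborel)" for \<omega> t
    by (rule set_nn_integral_cong) auto
  show ?thesis
  proof unfold_locales
    fix \<omega> assume \<omega>: "\<omega> \<in> space M"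
    interpret bounded_rate "?g \<omega>" "r + 1" using path[OF \<omega>] .
    show "\<And>t. 0 \<le> t \<Longrightarrow> (\<integral>\<^sup>+ s\<in>{0..t}. ennreal (equilibrium_rate r i (X s \<omega>)) \<partial>lborel)
        = ennreal (cumulative_rate (?g \<omega>) t)"
      unfolding Icc_eq by (rule nn_integral_eq_cumulative_rate)
    show "continuous_on {0..} (cumulative_rate (?g \<omega>))" by (rule cumulative_rate_continuous)
    show "mono_on {0..} (cumulative_rate (?g \<omega>))" by (rule cumulative_rate_mono)
    show "cumulative_rate (?g \<omega>) 0 = 0" by (rule cumulative_rate_0)
    fix e
    obtain t0 where "0 \<le> t0" "1 < X t0 \<omega>" using big[OF \<omega>] by blast
    then have "r \<le> ?g \<omega> u" if "t0 < u" for u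
      using mono_onD[OF mono_X[OF \<omega>], of t0 u] that \<open>i \<le> 1\<close>
      by (intro equilibrium_rate_above) (auto simp: max_def)
    then show "\<exists>t\<ge>0. e \<le> cumulative_rate (?g \<omega>) t"
      using cumulative_rate_unbounded[OF \<open>0 < r\<close> \<open>0 \<le> t0\<close>] by blast
  next
    fix t :: real assume t: "0 \<le> t"
    have [measurable]: "(\<lambda>p. X (fst p) (snd p)) \<in> borel_measurable (restrict_space lborel {0..t} \<Otimes>\<^sub>M G t)"
      using prog t unfolding progressive_def by blast
    have "(\<lambda>\<omega>. \<integral>\<^sup>+ s\<in>{0..t}. ennreal (equilibrium_rate r i (X s \<omega>)) \<partial>lborel) \<in> borel_measurable (G t)"
      by (rule nn_integral_Icc_measurable) (unfold equilibrium_rate_def, measurable)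
    then have "(\<lambda>\<omega>. cumulative_rate (?g \<omega>) t) \<in> borel_measurable (G t)"
      unfolding cumulative_rate_def Icc_eq[symmetric] by measurable
    then show "(\<lambda>\<omega>. cumulative_rate (?g \<omega>) t) \<in> borel_measurable (G_infty M G)"
      by (rule measurable_G_infty[OF filtration t])
  qed
qed

lemma first_passage_optimal:
  assumes prog: "progressive G X" and mono_X: "\<And>\<omega>. \<omega> \<in> space M \<Longrightarrow> mono_on {0..} (\<lambda>t. X t \<omega>)"
    and rc_X: "\<And>\<omega> t. \<omega> \<in> space M \<Longrightarrow> 0 \<le> t \<Longrightarrow> continuous (at_right t) (\<lambda>s. X s \<omega>)"
    and big: "\<And>\<omega>. \<omega> \<in> space M \<Longrightarrow> \<exists>t\<ge>0. 1 < X t \<omega>" and "0 < r" "0 \<le> i" "i \<le> 1"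
  shows "optimal_stopping M G r (\<lambda>t \<omega>. equilibrium_rate r i (X t \<omega>)) Ee (\<lambda>\<omega>. first_passage (\<lambda>t. X t \<omega>) i)"
proof -
  interpret cumulative_intensity M G Ee "\<lambda>t \<omega>. equilibrium_rate r i (X t \<omega>)"
      "\<lambda>\<omega>. cumulative_rate (\<lambda>s. equilibrium_rate r i (X (max s 0) \<omega>))"
    using cumulative_intensity_equilibrium[OF prog mono_X big assms(5-7)] .
  show ?thesis
  proof (rule optimal_stopping_if_pathwise_optimal)
    show "G_stopping_time G (\<lambda>\<omega>. first_passage (\<lambda>t. X t \<omega>) i)"
      using first_passage_stopping_time[OF filtration prog mono_X rc_X] .
    fix \<omega> \<sigma> assume \<omega>: "\<omega> \<in> space M"
    obtain T where "0 \<le> T" "first_passage (\<lambda>t. X t \<omega>) i = ennreal T"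
      "\<And>s. 0 \<le> s \<Longrightarrow> r * s - cumulative_rate (\<lambda>s. equilibrium_rate r i (X (max s 0) \<omega>)) s
        \<le> r * T - cumulative_rate (\<lambda>s. equilibrium_rate r i (X (max s 0) \<omega>)) T"
      using first_passage_drift_max[OF mono_X[OF \<omega>] rc_X[OF \<omega>] big[OF \<omega>] assms(5-7)] by blast
    then show "pathwise_payoff r (cumulative_rate (\<lambda>s. equilibrium_rate r i (X (max s 0) \<omega>))) \<sigma>
        \<le> pathwise_payoff r (cumulative_rate (\<lambda>s. equilibrium_rate r i (X (max s 0) \<omega>)))
            (first_passage (\<lambda>t. X t \<omega>) i)"
      using pathwise_payoff_le_if_maximal by metis
  qed
qed

end

theorem mainTheorem6:
  fixes M :: "'a measure" and G :: "real \<Rightarrow> 'a measure"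
    and Ee :: "'a \<Rightarrow> real" and X :: "real \<Rightarrow> 'a \<Rightarrow> real" and r :: real
  assumes "prob_space M"
    and "right_continuous_filtration M G"
    and "distributed M lborel Ee (exponential_density 1)"
    and "prob_space.indep_set M (sets (G_infty M G))
           {Ee -` A \<inter> space M | A. A \<in> sets (borel :: real measure)}"
    and "r > 0"
    and "progressive G X"
    and "\<forall>\<omega>\<in>space M. mono_on {0..} (\<lambda>t. X t \<omega>)"
    and "\<forall>\<omega>\<in>space M. \<forall>t\<ge>0. continuous (at_right t) (\<lambda>s. X s \<omega>)"
    and "\<forall>\<omega>\<in>space M. Lim at_top (\<lambda>t. ereal (X t \<omega>)) > 1"
  defines "\<rho> \<equiv> (\<lambda>t \<omega>. max (min (X t \<omega>) 1) 0)"
    and "\<gamma> \<equiv> (\<lambda>(i::real) t \<omega>. max (r - i + max (min (X t \<omega>) 1) 0) 0)"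
    and "\<tau> \<equiv> (\<lambda>(i::real) \<omega>. Inf {ennreal t | t. 0 \<le> t \<and> X t \<omega> \<ge> i})"
  shows "(\<forall>i\<in>{0..1}. optimal_stopping M G r (\<gamma> i) Ee (\<tau> i)) \<and>
         (\<forall>\<omega>\<in>space M. \<forall>t\<ge>0. measure lborel {i\<in>{0..1}. \<tau> i \<omega> \<le> ennreal t} = \<rho> t \<omega>)"
proof -
  interpret exponential_clock M G Ee
    using assms(1-4) by (intro exponential_clock.intro exponential_clock_axioms.intro)
  have mono: "\<And>\<omega>. \<omega> \<in> space M \<Longrightarrow> mono_on {0..} (\<lambda>t. X t \<omega>)"
    and rc: "\<And>\<omega> t. \<omega> \<in> space M \<Longrightarrow> 0 \<le> t \<Longrightarrow> continuous (at_right t) (\<lambda>s. X s \<omega>)"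
    using assms(7,8) by blast+
  have big: "\<exists>t\<ge>0. 1 < X t \<omega>" if "\<omega> \<in> space M" for \<omega>
    using exists_gt_of_Lim_gt[OF mono[OF that]] assms(9) that by (simp add: one_ereal_def)
  have \<gamma>_eq: "\<gamma> i = (\<lambda>t \<omega>. equilibrium_rate r i (X t \<omega>))" for i
    unfolding \<gamma>_def equilibrium_rate_def ..
  have \<tau>_eq: "\<tau> i = (\<lambda>\<omega>. first_passage (\<lambda>t. X t \<omega>) i)" for i
    unfolding \<tau>_def first_passage_def ..
  show ?thesis
  proof (intro conjI ballI allI impI)
    fix i :: real assume "i \<in> {0..1}"
    then show "optimal_stopping M G r (\<gamma> i) Ee (\<tau> i)"
      unfolding \<gamma>_eq \<tau>_eq using first_passage_optimal[OF assms(6) mono rc big assms(5)] by simp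
  next
    fix \<omega> and t :: real assume "\<omega> \<in> space M" "0 \<le> t"
    then have "{i \<in> {0..1}. \<tau> i \<omega> \<le> ennreal t} = {i \<in> {0..1}. i \<le> X t \<omega>}"
      unfolding \<tau>_eq using first_passage_le_iff[OF mono rc] by auto
    then show "measure lborel {i \<in> {0..1}. \<tau> i \<omega> \<le> ennreal t} = \<rho> t \<omega>"
      unfolding \<rho>_def by (metis measure_Icc_0_1_le)
  qed
qed

end
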